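(* Let $\mathcal{H}\subseteq\{0,1\}^{\mathcal{X}}$ be a hypothesis class and $\omega_m$ the clique number of $G_m(\mathcal{H})$. Then for all $m\ge1$, $\omega_m\le(2m+1)^{\mathtt{LD}(\mathcal{H})}\le(2m+1)^{\mathtt{CD}(\mathcal{H})}$.
   Context: A dataset of size $m$ is $S=((x_1,y_1),\dots,(x_m,y_m))\in(\mathcal{X}\times\{0,1\})^m$; it is $\mathcal{H}$-realizable if some $h\in\mathcal{H}$ satisfies $h(x_i)=y_i$ for all $i$. $G_m(\mathcal{H})$ is the graph on realizable datasets of size $m$ with $S,S'$ adjacent iff there is $x$ with $(x,0)$ appearing in $S$ and $(x,1)$ appearing in $S'$; $\omega_m$ is its clique number; $\mathtt{CD}(\mathcal{H})=\sup\{m:\omega_m=2^m\}$. A mistake tree is a complete binary tree whose internal nodes are labeled by points of $\mathcal{X}$, each internal node having one outgoing edge labeled $0$ and one labeled $1$; a root-to-leaf path yields the sequence of (node label, edge label) pairs. $\mathcal{H}$ shatters the tree if every root-to-leaf path is realizable by $\mathcal{H}$. $\mathtt{LD}(\mathcal{H})$ is the largest depth of a complete mistake tree shattered by $\mathcal{H}$ ($\infty$ if unbounded). *)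

theory Defs
  imports Main "HOL-Library.Extended_Nat"
begin

text \<open>Points range over the type 'x (the domain X); labels 0/1 are False/True.
  A hypothesis class is a set of functions 'x => bool.
  A dataset of size m is a list of (point,label) pairs of length m.\<close>

type_synonym 'x dataset = "('x \<times> bool) list"

definition realizable :: "('x \<Rightarrow> bool) set \<Rightarrow> 'x dataset \<Rightarrow> bool" where
  "realizable H S \<longleftrightarrow> (\<exists>h\<in>H. \<forall>(x,y)\<in>set S. h x = y)"

definition realizable_datasets :: "('x \<Rightarrow> bool) set \<Rightarrow> nat \<Rightarrow> 'x dataset set" where
  "realizable_datasets H m = {S. length S = m \<and> realizable H S}"

definition adjacent :: "'x dataset \<Rightarrow> 'x dataset \<Rightarrow> bool" where
  "adjacent S S' \<longleftrightarrow> (\<exists>x. ((x,False) \<in> set S \<and> (x,True) \<in> set S') \<or>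
                             ((x,True) \<in> set S \<and> (x,False) \<in> set S'))"

definition is_clique :: "('x \<Rightarrow> bool) set \<Rightarrow> nat \<Rightarrow> 'x dataset set \<Rightarrow> bool" where
  "is_clique H m C \<longleftrightarrow> C \<subseteq> realizable_datasets H m \<and>
     (\<forall>S\<in>C. \<forall>S'\<in>C. S \<noteq> S' \<longrightarrow> adjacent S S')"

definition clique_number :: "('x \<Rightarrow> bool) set \<Rightarrow> nat \<Rightarrow> enat" where
  "clique_number H m = Sup {enat (card C) | C. finite C \<and> is_clique H m C}"

definition CD :: "('x \<Rightarrow> bool) set \<Rightarrow> enat" where
  "CD H = Sup {enat m | m. clique_number H m = enat (2 ^ m)}"

text \<open>Mistake trees: internal nodes labelled by points; left subtree = edge 0,
  right subtree = edge 1.\<close>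
datatype 'x mtree = Leaf | Node 'x "'x mtree" "'x mtree"

fun complete_of_depth :: "'x mtree \<Rightarrow> nat \<Rightarrow> bool" where
  "complete_of_depth Leaf n = (n = 0)"
| "complete_of_depth (Node x l r) n =
     (n > 0 \<and> complete_of_depth l (n - 1) \<and> complete_of_depth r (n - 1))"

fun paths :: "'x mtree \<Rightarrow> 'x dataset set" where
  "paths Leaf = {[]}"
| "paths (Node x l r) = ((#) (x, False)) ` paths l \<union> ((#) (x, True)) ` paths r"

definition shatters_tree :: "('x \<Rightarrow> bool) set \<Rightarrow> 'x mtree \<Rightarrow> bool" where
  "shatters_tree H T \<longleftrightarrow> (\<forall>p\<in>paths T. realizable H p)"

definition LD :: "('x \<Rightarrow> bool) set \<Rightarrow> enat" where
  "LD H = Sup {enat d | d. \<exists>T. complete_of_depth T d \<and> shatters_tree H T}"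

definition epow :: "nat \<Rightarrow> enat \<Rightarrow> enat" where
  "epow b e = (case e of enat n \<Rightarrow> enat (b ^ n)
               | \<infinity> \<Rightarrow> (if b \<le> 1 then enat b else \<infinity>))"

end

theory Submission
  imports Defs
begin

text \<open>For every \<open>d \<ge> LD H\<close>, cliques of \<open>G\<^sub>m(H)\<close> have at most \<open>(2m+1)^d\<close> members, by
  induction on \<open>d\<close>. If \<open>LD H \<le> d + 1\<close>, then for every point \<open>x\<close> one of the subclasses
  \<open>{h \<in> H. h x = b}\<close> has Littlestone dimension at most \<open>d\<close> (otherwise two shattered trees of
  depth \<open>d + 1\<close> join at \<open>x\<close>), so at most \<open>T = (2m+1)^d\<close> members of a clique contain
  \<open>(x, b)\<close>. Each ordered pair of distinct members of a clique of size \<open>n\<close> is witnessed by a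
  labelled point \<open>l\<close> of the first whose flip \<open>l'\<close> lies in the second. With \<open>a(l)\<close> the number
  of members containing \<open>l\<close>, and \<open>min (a(l), a(l')) \<le> T\<close>, this gives
  \<open>n^2 \<le> n + \<Sum> a(l) a(l') \<le> n + T \<Sum> (a(l) + a(l')) \<le> n + 2Tmn\<close>, so \<open>n \<le> 2mT + 1 \<le> (2m+1)^(d+1)\<close>.

  For \<open>LD \<le> CD\<close>: the \<open>2^d\<close> root-to-leaf paths of a shattered tree of depth \<open>d\<close> form a clique
  of \<open>G\<^sub>d(H)\<close>, so \<open>\<omega>\<^sub>d = 2^d\<close>, because no clique of \<open>G\<^sub>m(H)\<close> is larger than \<open>2^m\<close>:
  the families of subsets of the support consistent with its members are pairwise disjoint,
  and each contains at least a \<open>2^-m\<close> fraction of all subsets.\<close>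

definition restrict_label :: "('x \<Rightarrow> bool) set \<Rightarrow> 'x \<Rightarrow> bool \<Rightarrow> ('x \<Rightarrow> bool) set" where
  "restrict_label H x b = {h \<in> H. h x = b}"

lemma realizable_Nil_iff [simp]: "realizable H [] \<longleftrightarrow> H \<noteq> {}"
  by (auto simp: realizable_def)

lemma realizable_Cons_iff: "realizable H ((x, b) # S) \<longleftrightarrow> realizable (restrict_label H x b) S"
  unfolding realizable_def restrict_label_def by (simp add: Bex_def)

lemma realizable_restrict_label:
  assumes "realizable H S" "(x, b) \<in> set S"
  shows "realizable (restrict_label H x b) S"
proof -
  obtain h where h: "h \<in> H" "\<forall>(z, y)\<in>set S. h z = y"
    using assms(1) unfolding realizable_def by blast
  then have "h x = b" using assms(2) by auto
  with h show ?thesis unfolding realizable_def restrict_label_def by blast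
qed

lemma adjacent_iff_opposite_labels:
  "adjacent S S' \<longleftrightarrow> (\<exists>x b. (x, b) \<in> set S \<and> (x, \<not> b) \<in> set S')"
  unfolding adjacent_def by (metis (full_types))

lemma adjacent_Cons: "adjacent S S' \<Longrightarrow> adjacent (a # S) (a' # S')"
  unfolding adjacent_def by auto

lemma adjacent_Cons_opposite: "b' = (\<not> b) \<Longrightarrow> adjacent ((x, b) # S) ((x, b') # S')"
  unfolding adjacent_iff_opposite_labels by auto

lemma is_clique_iff:
  "is_clique H m C \<longleftrightarrow> (\<forall>S\<in>C. length S = m \<and> realizable H S) \<and> pairwise adjacent C"
  unfolding is_clique_def realizable_datasets_def pairwise_def by blast

lemma is_clique_restrict_label:
  "is_clique H m C \<Longrightarrow> is_clique (restrict_label H x b) m {S \<in> C. (x, b) \<in> set S}"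
  by (auto simp: is_clique_iff realizable_restrict_label pairwise_def)

lemma is_clique_empty_class: "is_clique {} m C \<Longrightarrow> C = {}"
  by (auto simp: is_clique_iff realizable_def)

lemma clique_number_le_iff:
  "clique_number H m \<le> enat n \<longleftrightarrow> (\<forall>C. finite C \<and> is_clique H m C \<longrightarrow> card C \<le> n)"
  unfolding clique_number_def Sup_le_iff by fastforce

lemma card_le_clique_number: "finite C \<Longrightarrow> is_clique H m C \<Longrightarrow> enat (card C) \<le> clique_number H m"
  unfolding clique_number_def by (rule Sup_upper) blast

lemma shatters_tree_Leaf_iff [simp]: "shatters_tree H Leaf \<longleftrightarrow> H \<noteq> {}"
  by (simp add: shatters_tree_def)

lemma shatters_tree_Node_iff:
  "shatters_tree H (Node x l r) \<longleftrightarrow>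
     shatters_tree (restrict_label H x False) l \<and> shatters_tree (restrict_label H x True) r"
  by (simp add: shatters_tree_def realizable_Cons_iff ball_Un)

lemma paths_nonempty: "paths T \<noteq> {}"
  by (induction T) auto

lemma shatters_tree_nonempty_class: "shatters_tree H T \<Longrightarrow> H \<noteq> {}"
  using paths_nonempty[of T] by (force simp: shatters_tree_def realizable_def)

lemma shatters_tree_truncate:
  assumes "complete_of_depth T d" "shatters_tree H T" "k \<le> d"
  shows "\<exists>T'. complete_of_depth T' k \<and> shatters_tree H T'"
  using assms
proof (induction T arbitrary: H d k)
  case Leaf
  then show ?case by (intro exI[of _ Leaf]) auto
next
  case (Node x l r)
  show ?case
  proof (cases k)
    case 0
    then show ?thesis
      using shatters_tree_nonempty_class[OF Node.prems(2)] by (intro exI[of _ Leaf]) simp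
  next
    case (Suc k')
    have depth: "complete_of_depth l (d - 1)" "complete_of_depth r (d - 1)" "k' \<le> d - 1"
      using Node.prems(1,3) Suc by auto
    have "shatters_tree (restrict_label H x False) l" "shatters_tree (restrict_label H x True) r"
      using Node.prems(2) by (simp_all add: shatters_tree_Node_iff)
    then obtain l' r' where
      "complete_of_depth l' k'" "shatters_tree (restrict_label H x False) l'"
      "complete_of_depth r' k'" "shatters_tree (restrict_label H x True) r'"
      using Node.IH depth by meson
    then show ?thesis
      using Suc by (intro exI[of _ "Node x l' r'"]) (simp add: shatters_tree_Node_iff)
  qed
qed

lemma shattered_depth_le_LD: "complete_of_depth T d \<Longrightarrow> shatters_tree H T \<Longrightarrow> enat d \<le> LD H"
  unfolding LD_def by (rule Sup_upper) blast

lemma less_LD_imp_shattered_tree: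
  assumes "enat d < LD H"
  shows "\<exists>T. complete_of_depth T (Suc d) \<and> shatters_tree H T"
proof -
  obtain d' T where "enat d < enat d'" "complete_of_depth T d'" "shatters_tree H T"
    using assms unfolding LD_def less_Sup_iff by blast
  then show ?thesis using shatters_tree_truncate[of T d' H "Suc d"] by simp
qed

lemma LD_restrict_label_le:
  assumes "LD H \<le> enat (Suc d)"
  shows "\<exists>b. LD (restrict_label H x b) \<le> enat d"
proof (rule ccontr)
  assume "\<nexists>b. LD (restrict_label H x b) \<le> enat d"
  then obtain l r where "complete_of_depth l (Suc d)" "shatters_tree (restrict_label H x False) l"
    and "complete_of_depth r (Suc d)" "shatters_tree (restrict_label H x True) r"
    using less_LD_imp_shattered_tree by (meson not_le)
  then have "enat (Suc (Suc d)) \<le> LD H"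
    by (intro shattered_depth_le_LD[of "Node x l r"]) (simp_all add: shatters_tree_Node_iff)
  then have "enat (Suc (Suc d)) \<le> enat (Suc d)" using assms by (rule order_trans)
  then show False by simp
qed

lemma LD_zero_restrict_label_empty:
  assumes "LD H \<le> enat 0"
  shows "\<exists>b. restrict_label H x b = {}"
proof (rule ccontr)
  assume "\<nexists>b. restrict_label H x b = {}"
  then have "enat 1 \<le> LD H"
    by (intro shattered_depth_le_LD[of "Node x Leaf Leaf"]) (simp_all add: shatters_tree_Node_iff)
  then have "enat 1 \<le> enat 0" using assms by (rule order_trans)
  then show False by simp
qed

lemma finite_paths: "finite (paths T)"
  by (induction T) auto

lemma length_paths: "complete_of_depth T d \<Longrightarrow> p \<in> paths T \<Longrightarrow> length p = d"
  by (induction T arbitrary: d p) auto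

lemma card_paths: "complete_of_depth T d \<Longrightarrow> card (paths T) = 2 ^ d"
proof (induction T arbitrary: d)
  case Leaf
  then show ?case by simp
next
  case (Node x l r)
  then obtain d' where "d = Suc d'" "card (paths l) = 2 ^ d'" "card (paths r) = 2 ^ d'"
    by (cases d) auto
  moreover have "card (paths (Node x l r)) = card (paths l) + card (paths r)"
    unfolding paths.simps by (subst card_Un_disjoint) (auto simp: finite_paths card_image)
  ultimately show ?case by simp
qed

lemma pairwise_adjacent_paths: "pairwise adjacent (paths T)"
proof (induction T)
  case Leaf
  then show ?case by simp
next
  case (Node x l r)
  then show ?case
    unfolding paths.simps pairwise_def by (auto intro: adjacent_Cons adjacent_Cons_opposite)
qed

lemma mult_le_min_mult_add: "(a::nat) * b \<le> min a b * (a + b)"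
  by (cases "a \<le> b") (simp_all add: min_def add_mult_distrib2)

lemma sum_card_datasets_containing_le:
  fixes C :: "'x dataset set"
  assumes "finite C" "\<forall>S\<in>C. length S \<le> m" "finite A" "inj_on f A"
  shows "(\<Sum>l\<in>A. card {S \<in> C. f l \<in> set S}) \<le> card C * m"
proof -
  have "(\<Sum>l\<in>A. card {S \<in> C. f l \<in> set S}) = (\<Sum>S\<in>C. card {l \<in> A. f l \<in> set S})"
    using assms(1,3) by (intro sum_multicount_gen) auto
  also have "\<dots> \<le> (\<Sum>S\<in>C. m)"
  proof (rule sum_mono)
    fix S assume "S \<in> C"
    have "card {l \<in> A. f l \<in> set S} \<le> card (set S)"
      using assms(4) by (intro card_inj_on_le) (auto intro: inj_on_subset)
    also have "\<dots> \<le> m" using card_length assms(2) \<open>S \<in> C\<close> order_trans by blast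
    finally show "card {l \<in> A. f l \<in> set S} \<le> m" .
  qed
  finally show ?thesis by simp
qed

lemma card_pairwise_adjacent_le:
  fixes C :: "'x dataset set"
  assumes fin: "finite C" and adj: "pairwise adjacent C"
    and len: "\<forall>S\<in>C. length S \<le> m"
    and rare: "\<forall>x. \<exists>b. card {S \<in> C. (x, b) \<in> set S} \<le> T"
  shows "card C \<le> 2 * m * T + 1"
proof -
  define n where "n = card C"
  define occ where "occ l = {S \<in> C. l \<in> set S}" for l :: "'x \<times> bool"
  define L where "L = (\<Union>S\<in>C. set S)"
  have fin_L: "finite L" using fin by (simp add: L_def)
  have inj_flip: "inj_on (apsnd Not) L" by (rule inj_on_subset[of _ UNIV]) (simp_all add: inj_def)
  have pairs: "C \<times> C \<subseteq> (\<Union>l\<in>L. occ l \<times> occ (apsnd Not l)) \<union> (\<lambda>S. (S, S)) ` C"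
  proof clarify
    fix S S' assume "S \<in> C" "S' \<in> C" "(S, S') \<notin> (\<lambda>S. (S, S)) ` C"
    then have "adjacent S S'" using adj by (auto simp: pairwise_def)
    then obtain x b where "(x, b) \<in> set S" "(x, \<not> b) \<in> set S'"
      unfolding adjacent_iff_opposite_labels by blast
    with \<open>S \<in> C\<close> \<open>S' \<in> C\<close> show "(S, S') \<in> (\<Union>l\<in>L. occ l \<times> occ (apsnd Not l))"
      unfolding L_def occ_def by force
  qed
  have rare_pair:
    "card (occ l) * card (occ (apsnd Not l)) \<le> T * (card (occ l) + card (occ (apsnd Not l)))" for l
  proof -
    obtain x y where l: "l = (x, y)" by fastforce
    obtain b where "card (occ (x, b)) \<le> T" using rare unfolding occ_def by blast
    then have "min (card (occ l)) (card (occ (apsnd Not l))) \<le> T"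
      unfolding min_le_iff_disj by (cases b; cases y) (simp_all add: l)
    then show ?thesis using order_trans[OF mult_le_min_mult_add mult_right_mono] by simp
  qed
  have "n * n = card (C \<times> C)" by (simp add: n_def card_cartesian_product)
  also have "\<dots> \<le> card (\<Union>l\<in>L. occ l \<times> occ (apsnd Not l)) + card ((\<lambda>S. (S, S)) ` C)"
    using fin fin_L by (intro card_mono[OF _ pairs, THEN order_trans] card_Un_le)
      (auto simp: occ_def)
  also have "\<dots> \<le> (\<Sum>l\<in>L. card (occ l) * card (occ (apsnd Not l))) + n"
    using fin_L unfolding n_def
    by (intro add_mono card_image_le fin order_trans[OF card_UN_le])
      (simp_all add: card_cartesian_product)
  also have "\<dots> \<le> T * ((\<Sum>l\<in>L. card (occ l)) + (\<Sum>l\<in>L. card (occ (apsnd Not l)))) + n"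
    using rare_pair by (simp add: sum_mono sum_distrib_left flip: sum.distrib distrib_left)
  also have "\<dots> \<le> T * (n * m + n * m) + n"
    using sum_card_datasets_containing_le[OF fin len fin_L, of id]
      sum_card_datasets_containing_le[OF fin len fin_L inj_flip]
    unfolding occ_def n_def by (intro add_mono mult_left_mono) simp_all
  also have "\<dots> = n * (2 * m * T + 1)" by (simp add: algebra_simps)
  finally have "n * n \<le> n * (2 * m * T + 1)" .
  then have "0 < n \<longrightarrow> n \<le> 2 * m * T + 1" by (simp only: mult_le_cancel1)
  then show ?thesis unfolding n_def by arith
qed

lemma card_clique_le_pow_LD:
  assumes "LD H \<le> enat d" "is_clique H m C" "finite C"
  shows "card C \<le> (2 * m + 1) ^ d"
  using assms
proof (induction d arbitrary: H C)
  case 0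
  have "\<forall>x. \<exists>b. card {S \<in> C. (x, b) \<in> set S} \<le> 0"
  proof
    fix x
    obtain b where "restrict_label H x b = {}"
      using LD_zero_restrict_label_empty[OF "0.prems"(1)] by blast
    then have "{S \<in> C. (x, b) \<in> set S} = {}"
      using is_clique_empty_class is_clique_restrict_label[OF "0.prems"(2)] by metis
    then show "\<exists>b. card {S \<in> C. (x, b) \<in> set S} \<le> 0" by (metis card.empty le_refl)
  qed
  then have "card C \<le> 2 * m * 0 + 1"
    using "0.prems"(2,3) by (intro card_pairwise_adjacent_le) (auto simp: is_clique_iff)
  then show ?case by simp
next
  case (Suc d)
  have "\<forall>x. \<exists>b. card {S \<in> C. (x, b) \<in> set S} \<le> (2 * m + 1) ^ d"
  proof
    fix x
    obtain b where "LD (restrict_label H x b) \<le> enat d"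
      using LD_restrict_label_le[OF Suc.prems(1)] by blast
    then have "card {S \<in> C. (x, b) \<in> set S} \<le> (2 * m + 1) ^ d"
      using Suc.IH is_clique_restrict_label[OF Suc.prems(2)] Suc.prems(3) by simp
    then show "\<exists>b. card {S \<in> C. (x, b) \<in> set S} \<le> (2 * m + 1) ^ d" by blast
  qed
  then have "card C \<le> 2 * m * (2 * m + 1) ^ d + 1"
    using Suc.prems(2,3) by (intro card_pairwise_adjacent_le) (auto simp: is_clique_iff)
  also have "\<dots> \<le> (2 * m + 1) ^ Suc d" by (simp add: algebra_simps)
  finally show ?case .
qed

lemma card_subsets_agreeing_ge:
  assumes "finite V" "fst ` set S \<subseteq> V" "realizable H S"
  shows "2 ^ (card V - length S) \<le> card {G \<in> Pow V. \<forall>(x, y)\<in>set S. (x \<in> G) = y}"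
proof -
  obtain h where h: "\<forall>(x, y)\<in>set S. h x = y" using assms(3) unfolding realizable_def by blast
  define P where "P = fst ` set S"
  define Tr where "Tr = {x \<in> P. h x}"
  have "card P \<le> length S"
    unfolding P_def using card_image_le card_length order_trans by blast
  then have "card V - length S \<le> card (V - P)"
    using assms(1,2) by (simp add: P_def card_Diff_subset finite_subset)
  then have "2 ^ (card V - length S) \<le> card (Pow (V - P))"
    using assms(1) by (simp add: card_Pow)
  also have "\<dots> \<le> card {G \<in> Pow V. \<forall>(x, y)\<in>set S. (x \<in> G) = y}"
  proof (rule card_inj_on_le)
    show "inj_on (\<lambda>U. U \<union> Tr) (Pow (V - P))"
      unfolding Tr_def by (rule inj_onI) blast
    show "(\<lambda>U. U \<union> Tr) ` Pow (V - P) \<subseteq> {G \<in> Pow V. \<forall>(x, y)\<in>set S. (x \<in> G) = y}"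
      using assms(2) h unfolding P_def Tr_def by force
    show "finite {G \<in> Pow V. \<forall>(x, y)\<in>set S. (x \<in> G) = y}"
      using assms(1) by simp
  qed
  finally show ?thesis .
qed

lemma card_clique_le_pow2:
  assumes "is_clique H m C" "finite C"
  shows "card C \<le> 2 ^ m"
proof -
  define V where "V = fst ` (\<Union>S\<in>C. set S)"
  define agree where "agree S = {G \<in> Pow V. \<forall>(x, y)\<in>set S. (x \<in> G) = y}" for S :: "'a dataset"
  have fin_V: "finite V" using assms(2) by (simp add: V_def)
  have disjoint: "agree S \<inter> agree S' = {}" if "S \<in> C" "S' \<in> C" "S \<noteq> S'" for S S'
  proof -
    have "adjacent S S'" using assms(1) that unfolding is_clique_iff pairwise_def by blast
    then obtain x b where "(x, b) \<in> set S" "(x, \<not> b) \<in> set S'"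
      unfolding adjacent_iff_opposite_labels by blast
    then have "(x \<in> G) = b" "(x \<in> G) = (\<not> b)" if "G \<in> agree S" "G \<in> agree S'" for G
      using that unfolding agree_def by auto
    then show ?thesis by blast
  qed
  have agree_ge: "2 ^ (card V - m) \<le> card (agree S)" if "S \<in> C" for S
  proof -
    have "length S = m" "realizable H S" using assms(1) that by (auto simp: is_clique_iff)
    moreover have "fst ` set S \<subseteq> V" using that by (auto simp: V_def)
    ultimately show ?thesis
      unfolding agree_def using card_subsets_agreeing_ge[OF fin_V] by blast
  qed
  have "card C * 2 ^ (card V - m) = (\<Sum>S\<in>C. 2 ^ (card V - m))" by simp
  also have "\<dots> \<le> (\<Sum>S\<in>C. card (agree S))" using agree_ge by (rule sum_mono)
  also have "\<dots> = card (\<Union>S\<in>C. agree S)"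
    using assms(2) fin_V disjoint by (intro card_UN_disjoint[symmetric]) (auto simp: agree_def)
  also have "\<dots> \<le> card (Pow V)"
    using fin_V by (intro card_mono) (auto simp: agree_def)
  also have "\<dots> \<le> 2 ^ m * 2 ^ (card V - m)"
    using fin_V by (simp add: card_Pow flip: power_add)
  finally show ?thesis by simp
qed

lemma clique_number_eq_pow2_if_shattered:
  assumes "complete_of_depth T d" "shatters_tree H T"
  shows "clique_number H d = enat (2 ^ d)"
proof (rule antisym)
  show "clique_number H d \<le> enat (2 ^ d)"
    unfolding clique_number_le_iff using card_clique_le_pow2 by blast
  have "is_clique H d (paths T)"
    using assms unfolding is_clique_iff shatters_tree_def
    by (simp add: length_paths pairwise_adjacent_paths)
  then show "enat (2 ^ d) \<le> clique_number H d"
    using card_le_clique_number[OF finite_paths] card_paths[OF assms(1)] by metis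
qed

lemma LD_le_CD: "LD H \<le> CD H"
  unfolding LD_def
proof (rule Sup_least)
  fix e assume "e \<in> {enat d |d. \<exists>T. complete_of_depth T d \<and> shatters_tree H T}"
  then obtain d T where "e = enat d" "complete_of_depth T d" "shatters_tree H T" by blast
  then show "e \<le> CD H"
    unfolding CD_def by (intro Sup_upper) (auto dest: clique_number_eq_pow2_if_shattered)
qed

lemma epow_enat [simp]: "epow b (enat n) = enat (b ^ n)"
  by (simp add: epow_def)

lemma epow_infinity: "2 \<le> b \<Longrightarrow> epow b \<infinity> = \<infinity>"
  by (simp add: epow_def)

lemma epow_mono: "1 \<le> b \<Longrightarrow> e \<le> e' \<Longrightarrow> epow b e \<le> epow b e'"
  by (cases e; cases e') (auto simp: epow_def power_increasing)

theorem mainTheorem11: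
  fixes H :: "('x \<Rightarrow> bool) set" and m :: nat
  assumes "m \<ge> 1"
  shows "clique_number H m \<le> epow (2 * m + 1) (LD H)
       \<and> epow (2 * m + 1) (LD H) \<le> epow (2 * m + 1) (CD H)"
proof
  show "clique_number H m \<le> epow (2 * m + 1) (LD H)"
  proof (cases "LD H")
    case (enat d)
    then show ?thesis
      using card_clique_le_pow_LD[of H d m] by (simp add: clique_number_le_iff)
  next
    case infinity
    then show ?thesis using epow_infinity[of "2 * m + 1"] assms by simp
  qed
  show "epow (2 * m + 1) (LD H) \<le> epow (2 * m + 1) (CD H)"
    by (simp add: epow_mono LD_le_CD)
qed

end
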